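(* Let $(X,+,d)$ be an Abelian group with translation-invariant metric $d$. Let $A\in K(X)$, let $(A_n)$ be a sequence in $K(X)$ converging to $A$ in the Pompeiu–Hausdorff metric, and assume that $(S(A_n))$ converges in $K(X)$ to some $B\in K(X)$. Then $B\subset S(A)$.
   Context: $d$ satisfies $d(x,y)=d(x+z,y+z)$ for all $x,y,z\in X$. $K(X)$ is the family of non-empty compact subsets of $X$ with the Pompeiu–Hausdorff metric $d_H(A,B)=\max\{\sup_{a\in A}d(a,B),\sup_{b\in B}d(A,b)\}$. The spectre of $A\subset X$ is $S(A):=\{z\in X:\ \forall_{a\in A}\ (a+z\in A \text{ or } a-z\in A)\}$; it is compact for compact non-empty $A$. *)

theory Defs
  imports "HOL-Analysis.Analysis"
begin

definition Kset :: "'a::metric_space set set" where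
  "Kset = {A. A \<noteq> {} \<and> compact A}"

definition hausdorff_dist :: "'a::metric_space set \<Rightarrow> 'a set \<Rightarrow> real" where
  "hausdorff_dist A B = max (SUP a\<in>A. infdist a B) (SUP b\<in>B. infdist b A)"

definition spectre :: "'a::ab_group_add set \<Rightarrow> 'a set" where
  "spectre A = {z. \<forall>a\<in>A. a + z \<in> A \<or> a - z \<in> A}"

end

theory Submission
  imports Defs
begin

text \<open>
  For \<open>a \<in> A\<close> and \<open>b \<in> B\<close> consider the defect
  \<open>min (infdist (a + b) A) (infdist (a - b) A)\<close>. Approximate \<open>a\<close> by a point \<open>c\<close> of \<open>A\<^sub>n\<close>
  and \<open>b\<close> by a point \<open>z\<close> of \<open>S(A\<^sub>n)\<close>; then \<open>c + z\<close> or \<open>c - z\<close> lies in \<open>A\<^sub>n\<close>, hence within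
  \<open>d\<^sub>H(A\<^sub>n, A)\<close> of \<open>A\<close>, and by translation invariance \<open>a \<plusminus> b\<close> is within
  \<open>d(a, c) + d(b, z)\<close> of \<open>c \<plusminus> z\<close>. So the defect is at most
  \<open>2 d\<^sub>H(A\<^sub>n, A) + d\<^sub>H(S(A\<^sub>n), B)\<close>, which tends to \<open>0\<close>; as \<open>A\<close> is closed, \<open>a + b \<in> A\<close> or
  \<open>a - b \<in> A\<close>.
\<close>

lemma hausdorff_dist_commute: "hausdorff_dist A B = hausdorff_dist B A"
  by (simp add: hausdorff_dist_def max.commute)

lemma infdist_le_hausdorff_dist:
  fixes A B :: "'a::metric_space set"
  assumes "bounded A" "B \<noteq> {}" "a \<in> A"
  shows "infdist a B \<le> hausdorff_dist A B"
proof -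
  obtain c r where cr: "\<And>x. x \<in> A \<Longrightarrow> dist c x \<le> r"
    using \<open>bounded A\<close> unfolding bounded_def by blast
  have "infdist x B \<le> infdist c B + r" if "x \<in> A" for x
    using infdist_triangle[of x B c] cr[OF that] by (simp add: dist_commute)
  then have "bdd_above ((\<lambda>x. infdist x B) ` A)"
    by (rule bdd_aboveI2)
  then have "infdist a B \<le> (SUP x\<in>A. infdist x B)"
    using \<open>a \<in> A\<close> by (rule cSUP_upper2) simp
  then show ?thesis
    unfolding hausdorff_dist_def by linarith
qed

lemma infdist_le_hausdorff_dist':
  fixes A B :: "'a::metric_space set"
  assumes "bounded B" "A \<noteq> {}" "b \<in> B"
  shows "infdist b A \<le> hausdorff_dist A B"
  using infdist_le_hausdorff_dist[OF assms] by (simp add: hausdorff_dist_commute)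

lemma exists_dist_less_infdist_add:
  fixes A :: "'a::metric_space set"
  assumes "A \<noteq> {}" "0 < e"
  shows "\<exists>a\<in>A. dist x a < infdist x A + e"
proof -
  have "bdd_below ((\<lambda>a. dist x a) ` A)"
    by (auto intro: bdd_belowI2[where m = 0])
  moreover have "(INF a\<in>A. dist x a) < infdist x A + e"
    using assms by (simp add: infdist_notempty)
  ultimately show ?thesis
    using \<open>A \<noteq> {}\<close> by (simp add: cINF_less_iff)
qed

lemma dist_add_add_le:
  fixes x y x' y' :: "'a::{ab_group_add, metric_space}"
  assumes transl_inv: "\<And>x y z :: 'a. dist x y = dist (x + z) (y + z)"
  shows "dist (x + y) (x' + y') \<le> dist x x' + dist y y'"
proof -
  have "dist (x + y) (x' + y') \<le> dist (x + y) (x' + y) + dist (x' + y) (x' + y')"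
    by (rule dist_triangle)
  also have "dist (x + y) (x' + y) = dist x x'"
    using transl_inv[of x x' y] by simp
  also have "dist (x' + y) (x' + y') = dist y y'"
    using transl_inv[of y y' x'] by (simp add: add.commute)
  finally show ?thesis .
qed

lemma dist_diff_diff_le:
  fixes x y x' y' :: "'a::{ab_group_add, metric_space}"
  assumes transl_inv: "\<And>x y z :: 'a. dist x y = dist (x + z) (y + z)"
  shows "dist (x - y) (x' - y') \<le> dist x x' + dist y y'"
proof -
  have "dist (x - y) (x' - y') \<le> dist (x - y) (x' - y) + dist (x' - y) (x' - y')"
    by (rule dist_triangle)
  also have "dist (x - y) (x' - y) = dist x x'"
    using transl_inv[of x x' "- y"] by simp
  also have "dist (x' - y) (x' - y') = dist y y'"
    using transl_inv[of "x' - y" "x' - y'" "y + y' - x'"] by (simp add: dist_commute)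
  finally show ?thesis .
qed

lemma zero_in_spectre: "0 \<in> spectre A"
  by (simp add: spectre_def)

lemma min_infdist_plus_minus_le_hausdorff_dist:
  fixes A B C :: "'a::{ab_group_add, metric_space} set"
  assumes transl_inv: "\<And>x y z :: 'a. dist x y = dist (x + z) (y + z)"
    and "bounded A" "bounded B" "bounded C" "A \<noteq> {}" "C \<noteq> {}" "a \<in> A" "b \<in> B"
  shows "min (infdist (a + b) A) (infdist (a - b) A)
           \<le> 2 * hausdorff_dist C A + hausdorff_dist (spectre C) B"
proof (rule field_le_epsilon)
  fix e :: real
  assume "0 < e"
  then have "0 < e / 2" by simp
  obtain c where c: "c \<in> C" "dist a c < infdist a C + e / 2"
    using exists_dist_less_infdist_add[OF \<open>C \<noteq> {}\<close> \<open>0 < e / 2\<close>] by blast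
  obtain z where z: "z \<in> spectre C" "dist b z < infdist b (spectre C) + e / 2"
    using exists_dist_less_infdist_add[OF _ \<open>0 < e / 2\<close>, of "spectre C"] zero_in_spectre
    by blast
  have a_near_C: "infdist a C \<le> hausdorff_dist C A"
    using infdist_le_hausdorff_dist' assms by blast
  have b_near_spectre: "infdist b (spectre C) \<le> hausdorff_dist (spectre C) B"
    using infdist_le_hausdorff_dist'[OF \<open>bounded B\<close> _ \<open>b \<in> B\<close>] zero_in_spectre by blast
  have near_A: "infdist v A \<le> hausdorff_dist C A + dist v w" if "w \<in> C" for v w
    using infdist_triangle[of v A w] infdist_le_hausdorff_dist[OF \<open>bounded C\<close> \<open>A \<noteq> {}\<close> that]
    by linarith
  have "c + z \<in> C \<or> c - z \<in> C"
    using c(1) z(1) by (simp add: spectre_def)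
  then have "min (infdist (a + b) A) (infdist (a - b) A)
               \<le> hausdorff_dist C A + (dist a c + dist b z)"
    using near_A[of "c + z" "a + b"] near_A[of "c - z" "a - b"]
      dist_add_add_le[OF transl_inv, of a b c z] dist_diff_diff_le[OF transl_inv, of a b c z]
    by (auto simp: min_le_iff_disj)
  then show "min (infdist (a + b) A) (infdist (a - b) A)
               \<le> 2 * hausdorff_dist C A + hausdorff_dist (spectre C) B + e"
    using c(2) z(2) a_near_C b_near_spectre by linarith
qed

theorem lemma3p8:
  fixes A B :: "'a::{ab_group_add, metric_space} set"
    and As :: "nat \<Rightarrow> 'a set"
  assumes transl_inv: "\<And>x y z :: 'a. dist x y = dist (x + z) (y + z)"
    and A_K: "A \<in> Kset"
    and As_K: "\<And>n. As n \<in> Kset"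
    and As_lim: "(\<lambda>n. hausdorff_dist (As n) A) \<longlonglongrightarrow> 0"
    and B_K: "B \<in> Kset"
    and S_lim: "(\<lambda>n. hausdorff_dist (spectre (As n)) B) \<longlonglongrightarrow> 0"
  shows "B \<subseteq> spectre A"
proof
  fix b
  assume "b \<in> B"
  have "A \<noteq> {}" "closed A" "bounded A" "bounded B" "\<And>n. As n \<noteq> {}" "\<And>n. bounded (As n)"
    using A_K B_K As_K by (auto simp: Kset_def compact_imp_closed compact_imp_bounded)
  show "b \<in> spectre A"
    unfolding spectre_def
  proof (intro CollectI ballI)
    fix a
    assume "a \<in> A"
    have "(\<lambda>n. 2 * hausdorff_dist (As n) A + hausdorff_dist (spectre (As n)) B) \<longlonglongrightarrow> 2 * 0 + 0"
      using As_lim S_lim by (intro tendsto_intros)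
    moreover have "min (infdist (a + b) A) (infdist (a - b) A)
                     \<le> 2 * hausdorff_dist (As n) A + hausdorff_dist (spectre (As n)) B" for n
      using min_infdist_plus_minus_le_hausdorff_dist[OF transl_inv] \<open>a \<in> A\<close> \<open>b \<in> B\<close> \<open>A \<noteq> {}\<close>
        \<open>bounded A\<close> \<open>bounded B\<close> \<open>As n \<noteq> {}\<close> \<open>bounded (As n)\<close> by blast
    ultimately have "min (infdist (a + b) A) (infdist (a - b) A) \<le> 0"
      by (intro LIMSEQ_le_const) auto
    then have "infdist (a + b) A = 0 \<or> infdist (a - b) A = 0"
      using infdist_nonneg[of "a + b" A] infdist_nonneg[of "a - b" A] by linarith
    then show "a + b \<in> A \<or> a - b \<in> A"
      using in_closed_iff_infdist_zero[OF \<open>closed A\<close> \<open>A \<noteq> {}\<close>] by blast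
  qed
qed

end
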